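(* Let $n\ge 3$, let $K$ be a field and $S_n$ as defined below. If $Q$ is a prime ideal of the monoid $S_n$, then $Q\supseteq a_1a_2\cdots a_nS_n$ and $K[Q]$ is a prime ideal of $K[S_n]$; moreover $K[S_n]/K[Q]$ is isomorphic to a prime monomial algebra.
   Context: For $n\ge 3$, $S_n$ denotes the monoid with generators $a_1,\dots,a_n$ and defining relations $a_1a_2\cdots a_n=a_{\sigma(1)}a_{\sigma(2)}\cdots a_{\sigma(n)}$ for all $\sigma$ in the cyclic subgroup of $\operatorname{Sym}_n$ generated by the cycle $(1,2,\dots,n)$. An ideal $Q\neq S$ of a monoid $S$ is prime if $aSb\subseteq Q$ with $a,b\in S$ implies $a\in Q$ or $b\in Q$. For an ideal $I$ of $S_n$, $K[I]$ denotes the $K$-linear span of $I$ in $K[S_n]$. A monomial algebra is a quotient of a free algebra $K\langle x_1,\dots,x_m\rangle$ by an ideal spanned by words. *)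

theory Defs
  imports "HOL-Algebra.Algebra"
begin

text \<open>Generator a_(i+1) is encoded as the letter i, so words over a_1..a_n are
  lists over {..<n}; the word a_1 a_2 ... a_n is [0..<n]. The permutation
  (1 2 ... n)^k sends a_1...a_n to the rotated word rotate k [0..<n].\<close>

definition words :: "nat \<Rightarrow> nat list set" where
  "words n = {w. set w \<subseteq> {..<n}}"

definition Sn_rel0 :: "nat \<Rightarrow> (nat list \<times> nat list) set" where
  "Sn_rel0 n = {(u @ [0..<n] @ v, u @ rotate k [0..<n] @ v) | u v k.
                  u \<in> words n \<and> v \<in> words n \<and> k < n}"

definition Sn_cong :: "nat \<Rightarrow> (nat list \<times> nat list) set" where
  "Sn_cong n = (Sn_rel0 n \<union> (Sn_rel0 n)\<inverse>)\<^sup>*"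

definition Sn :: "nat \<Rightarrow> nat list set monoid" where
  "Sn n = \<lparr> carrier = words n // Sn_cong n,
            monoid.mult = (\<lambda>C D. Sn_cong n `` {(SOME w. w \<in> C) @ (SOME w. w \<in> D)}),
            one = Sn_cong n `` {[]} \<rparr>"

definition Sn_top :: "nat \<Rightarrow> nat list set" where
  "Sn_top n = Sn_cong n `` {[0..<n]}"

text \<open>The free monoid on m generators x_1..x_m (letter i encodes x_(i+1)).\<close>
definition free_mon :: "nat \<Rightarrow> nat list monoid" where
  "free_mon m = \<lparr> carrier = words m, monoid.mult = (@), one = [] \<rparr>"

text \<open>Semigroup ideals are nonempty by convention.\<close>
definition mon_ideal :: "('m, 'b) monoid_scheme \<Rightarrow> 'm set \<Rightarrow> bool" where
  "mon_ideal S Q \<longleftrightarrow> Q \<noteq> {} \<and> Q \<subseteq> carrier S \<and>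
     (\<forall>q\<in>Q. \<forall>s\<in>carrier S. q \<otimes>\<^bsub>S\<^esub> s \<in> Q \<and> s \<otimes>\<^bsub>S\<^esub> q \<in> Q)"

definition mon_prime :: "('m, 'b) monoid_scheme \<Rightarrow> 'm set \<Rightarrow> bool" where
  "mon_prime S Q \<longleftrightarrow> mon_ideal S Q \<and> Q \<noteq> carrier S \<and>
     (\<forall>a\<in>carrier S. \<forall>b\<in>carrier S.
        (\<forall>s\<in>carrier S. a \<otimes>\<^bsub>S\<^esub> s \<otimes>\<^bsub>S\<^esub> b \<in> Q) \<longrightarrow> a \<in> Q \<or> b \<in> Q)"

definition mon_alg :: "('m, 'b) monoid_scheme \<Rightarrow> ('m \<Rightarrow> 'k::field) ring" where
  "mon_alg M = \<lparr> carrier = {f. (\<forall>x. x \<notin> carrier M \<longrightarrow> f x = 0) \<and> finite {x. f x \<noteq> 0}},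
     monoid.mult = (\<lambda>f g z. \<Sum>(x, y) \<in> {(x, y). x \<in> carrier M \<and> y \<in> carrier M \<and>
                                   f x \<noteq> 0 \<and> g y \<noteq> 0 \<and> x \<otimes>\<^bsub>M\<^esub> y = z}. f x * g y),
     one = (\<lambda>z. if z = \<one>\<^bsub>M\<^esub> then 1 else 0),
     ring.zero = (\<lambda>_. 0),
     ring.add = (\<lambda>f g z. f z + g z) \<rparr>"

definition span_in :: "('m, 'b) monoid_scheme \<Rightarrow> 'm set \<Rightarrow> ('m \<Rightarrow> 'k::field) set" where
  "span_in M I = {f \<in> carrier (mon_alg M). \<forall>x. f x \<noteq> 0 \<longrightarrow> x \<in> I}"

definition smult_fun :: "'k::field \<Rightarrow> ('m \<Rightarrow> 'k) \<Rightarrow> ('m \<Rightarrow> 'k)" where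
  "smult_fun k f = (\<lambda>z. k * f z)"

definition nc_prime_ideal :: "'a set \<Rightarrow> ('a, 'b) ring_scheme \<Rightarrow> bool" where
  "nc_prime_ideal I R \<longleftrightarrow> ideal I R \<and> I \<noteq> carrier R \<and>
     (\<forall>a\<in>carrier R. \<forall>b\<in>carrier R.
        (\<forall>r\<in>carrier R. a \<otimes>\<^bsub>R\<^esub> r \<otimes>\<^bsub>R\<^esub> b \<in> I) \<longrightarrow> a \<in> I \<or> b \<in> I)"

definition prime_ring :: "('a, 'b) ring_scheme \<Rightarrow> bool" where
  "prime_ring R \<longleftrightarrow> ring R \<and> carrier R \<noteq> {\<zero>\<^bsub>R\<^esub>} \<and>
     (\<forall>a\<in>carrier R. \<forall>b\<in>carrier R.
        (\<forall>r\<in>carrier R. a \<otimes>\<^bsub>R\<^esub> r \<otimes>\<^bsub>R\<^esub> b = \<zero>\<^bsub>R\<^esub>) \<longrightarrow> a = \<zero>\<^bsub>R\<^esub> \<or> b = \<zero>\<^bsub>R\<^esub>)"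

text \<open>W is a set of words closed under multiplication by words on both sides
  (so its span is an ideal of the free algebra).\<close>
definition word_ideal :: "nat \<Rightarrow> nat list set \<Rightarrow> bool" where
  "word_ideal m W \<longleftrightarrow> W \<subseteq> words m \<and>
     (\<forall>w\<in>W. \<forall>u\<in>words m. \<forall>v\<in>words m. u @ w @ v \<in> W)"

text \<open>An isomorphism of K-algebras A/I -> B/J: a ring isomorphism of the quotient
  rings that is K-linear.\<close>
definition quot_alg_iso ::
  "('m \<Rightarrow> 'k::field) ring \<Rightarrow> ('m \<Rightarrow> 'k) set \<Rightarrow> ('n \<Rightarrow> 'k) ring \<Rightarrow> ('n \<Rightarrow> 'k) set
     \<Rightarrow> (('m \<Rightarrow> 'k) set \<Rightarrow> ('n \<Rightarrow> 'k) set) \<Rightarrow> bool" where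
  "quot_alg_iso A I B J \<phi> \<longleftrightarrow> \<phi> \<in> ring_iso (A Quot I) (B Quot J) \<and>
     (\<forall>k x y. x \<in> carrier A \<longrightarrow> y \<in> carrier B \<longrightarrow> \<phi> (I +>\<^bsub>A\<^esub> x) = J +>\<^bsub>B\<^esub> y \<longrightarrow>
        \<phi> (I +>\<^bsub>A\<^esub> smult_fun k x) = J +>\<^bsub>B\<^esub> smult_fun k y)"

end

theory Submission
  imports Defs
begin

text \<open>
  The only defining relations rewrite the word a_1 ... a_n into one of its
  cyclic rotations.  Consequently the congruence class of a word is a singleton
  unless the word contains such a rotation.  For a prime ideal Q one shows that
  a_1 ... a_n is central and lies in Q, so every class outside Q is a singleton
  and S_n \ Q embeds into the free monoid.  Writing W for the set of words whose
  class lies in Q, the map sending a class outside Q to its unique word induces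
  a surjective ring homomorphism K[S_n] -> K<x_1..x_n>/K[W] with kernel K[Q].
  The ideal W of the free monoid inherits primeness from Q (any two words u, v
  outside W are joined by some s with u s v outside W), and a leading-length
  argument shows that K<x>/K[W] is then a prime ring, i.e. a prime monomial
  algebra.  Primeness of K[Q] is pulled back along the homomorphism.  The
  argument does not use the hypothesis n >= 3.
\<close>

section \<open>Monoid algebras\<close>

lemma mon_alg_carrier_iff:
  "f \<in> carrier (mon_alg M) \<longleftrightarrow> (\<forall>x. x \<notin> carrier M \<longrightarrow> f x = 0) \<and> finite {x. f x \<noteq> 0}"
  by (simp add: mon_alg_def)

lemma mon_alg_add: "f \<oplus>\<^bsub>mon_alg M\<^esub> g = (\<lambda>z. f z + g z)"
  by (simp add: mon_alg_def)

lemma mon_alg_zero: "\<zero>\<^bsub>mon_alg M\<^esub> = (\<lambda>_. 0)"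
  by (simp add: mon_alg_def)

lemma mon_alg_one: "\<one>\<^bsub>mon_alg M\<^esub> = (\<lambda>z. if z = \<one>\<^bsub>M\<^esub> then 1 else 0)"
  by (simp add: mon_alg_def)

lemma mon_alg_supp: "f \<in> carrier (mon_alg M) \<Longrightarrow> f x \<noteq> 0 \<Longrightarrow> x \<in> carrier M"
  by (auto simp: mon_alg_carrier_iff)

lemma mon_alg_finite_supp: "f \<in> carrier (mon_alg M) \<Longrightarrow> finite {x. f x \<noteq> 0}"
  by (simp add: mon_alg_carrier_iff)

lemma mon_alg_mult_factorisations:
  fixes f g :: "'m \<Rightarrow> 'k::field"
  assumes D: "finite D" "D \<subseteq> {(x, y). x \<in> carrier M \<and> y \<in> carrier M \<and> x \<otimes>\<^bsub>M\<^esub> y = z}"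
    and complete: "\<And>x y. x \<in> carrier M \<Longrightarrow> y \<in> carrier M \<Longrightarrow> f x \<noteq> 0 \<Longrightarrow> g y \<noteq> 0 \<Longrightarrow>
                     x \<otimes>\<^bsub>M\<^esub> y = z \<Longrightarrow> (x, y) \<in> D"
  shows "(f \<otimes>\<^bsub>mon_alg M\<^esub> g) z = (\<Sum>(x, y)\<in>D. f x * g y)"
proof -
  let ?P = "{(x, y). x \<in> carrier M \<and> y \<in> carrier M \<and> f x \<noteq> 0 \<and> g y \<noteq> 0 \<and> x \<otimes>\<^bsub>M\<^esub> y = z}"
  have "(f \<otimes>\<^bsub>mon_alg M\<^esub> g) z = (\<Sum>(x, y)\<in>?P. f x * g y)"
    by (simp add: mon_alg_def)
  also have "\<dots> = (\<Sum>(x, y)\<in>D. f x * g y)"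
    by (rule sum.mono_neutral_left[OF D(1)]) (use complete D(2) in auto)
  finally show ?thesis .
qed

lemma mon_alg_mult_expand:
  fixes f g :: "'m \<Rightarrow> 'k::field"
  assumes f: "f \<in> carrier (mon_alg M)" and g: "g \<in> carrier (mon_alg M)"
    and A: "finite A" "{x. f x \<noteq> 0} \<subseteq> A" and B: "finite B" "{y. g y \<noteq> 0} \<subseteq> B"
  shows "(f \<otimes>\<^bsub>mon_alg M\<^esub> g) z = (\<Sum>x\<in>A. \<Sum>y\<in>B. if x \<otimes>\<^bsub>M\<^esub> y = z then f x * g y else 0)"
proof -
  let ?P = "{(x, y). x \<in> carrier M \<and> y \<in> carrier M \<and> f x \<noteq> 0 \<and> g y \<noteq> 0 \<and> x \<otimes>\<^bsub>M\<^esub> y = z}"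
  have "(f \<otimes>\<^bsub>mon_alg M\<^esub> g) z = (\<Sum>(x, y)\<in>?P. f x * g y)"
    by (simp add: mon_alg_def)
  also have "\<dots> = (\<Sum>(x, y)\<in>A \<times> B. if x \<otimes>\<^bsub>M\<^esub> y = z then f x * g y else 0)"
    by (rule sum.mono_neutral_cong_left)
      (use A B mon_alg_supp[OF f] mon_alg_supp[OF g] in \<open>auto split: if_splits\<close>)
  also have "\<dots> = (\<Sum>x\<in>A. \<Sum>y\<in>B. if x \<otimes>\<^bsub>M\<^esub> y = z then f x * g y else 0)"
    by (rule sum.cartesian_product[symmetric])
  finally show ?thesis .
qed

lemma mon_alg_mult_supp:
  fixes f g :: "'m \<Rightarrow> 'k::field"
  assumes f: "f \<in> carrier (mon_alg M)" and g: "g \<in> carrier (mon_alg M)"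
    and nz: "(f \<otimes>\<^bsub>mon_alg M\<^esub> g) z \<noteq> 0"
  shows "\<exists>x y. f x \<noteq> 0 \<and> g y \<noteq> 0 \<and> x \<otimes>\<^bsub>M\<^esub> y = z"
proof (rule ccontr)
  assume "\<not> ?thesis"
  then have "(\<Sum>x\<in>{x. f x \<noteq> 0}. \<Sum>y\<in>{y. g y \<noteq> 0}. if x \<otimes>\<^bsub>M\<^esub> y = z then f x * g y else 0) = 0"
    by (intro sum.neutral ballI) auto
  with nz show False
    using mon_alg_mult_expand[OF f g, of "{x. f x \<noteq> 0}" "{y. g y \<noteq> 0}" z]
    by (simp add: mon_alg_finite_supp[OF f] mon_alg_finite_supp[OF g])
qed

lemma mon_alg_mult_closed:
  fixes f g :: "'m \<Rightarrow> 'k::field"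
  assumes M: "monoid M" and f: "f \<in> carrier (mon_alg M)" and g: "g \<in> carrier (mon_alg M)"
  shows "f \<otimes>\<^bsub>mon_alg M\<^esub> g \<in> carrier (mon_alg M)"
proof -
  have supp: "{z. (f \<otimes>\<^bsub>mon_alg M\<^esub> g) z \<noteq> 0}
      \<subseteq> (\<lambda>(x, y). x \<otimes>\<^bsub>M\<^esub> y) ` ({x. f x \<noteq> 0} \<times> {y. g y \<noteq> 0})"
    using mon_alg_mult_supp[OF f g] by fastforce
  then have "finite {z. (f \<otimes>\<^bsub>mon_alg M\<^esub> g) z \<noteq> 0}"
    by (rule finite_subset) (use f g in \<open>simp add: mon_alg_finite_supp\<close>)
  moreover have "z \<in> carrier M" if nz: "(f \<otimes>\<^bsub>mon_alg M\<^esub> g) z \<noteq> 0" for z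
  proof -
    obtain x y where "f x \<noteq> 0" "g y \<noteq> 0" "x \<otimes>\<^bsub>M\<^esub> y = z"
      using mon_alg_mult_supp[OF f g nz] by blast
    then show ?thesis using mon_alg_supp[OF f] mon_alg_supp[OF g] M by (metis monoid.m_closed)
  qed
  ultimately show ?thesis by (auto simp: mon_alg_carrier_iff)
qed

lemma mon_alg_one_closed: "monoid M \<Longrightarrow> (\<one>\<^bsub>mon_alg M\<^esub> :: 'm \<Rightarrow> 'k::field) \<in> carrier (mon_alg M)"
  by (auto simp: mon_alg_carrier_iff mon_alg_one monoid.one_closed)

lemma mon_alg_add_closed:
  "f \<in> carrier (mon_alg M) \<Longrightarrow> g \<in> carrier (mon_alg M) \<Longrightarrow>
     (f \<oplus>\<^bsub>mon_alg M\<^esub> g :: 'm \<Rightarrow> 'k::field) \<in> carrier (mon_alg M)"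
proof -
  assume f: "f \<in> carrier (mon_alg M)" and g: "g \<in> carrier (mon_alg M)"
  have "{x. f x + g x \<noteq> 0} \<subseteq> {x. f x \<noteq> 0} \<union> {x. g x \<noteq> 0}" by auto
  then have "finite {x. f x + g x \<noteq> 0}"
    by (rule finite_subset) (use f g in \<open>simp add: mon_alg_finite_supp\<close>)
  then show ?thesis using f g by (auto simp: mon_alg_carrier_iff mon_alg_add)
qed

lemma sum_collapse:
  assumes "finite T" "\<And>a b. a \<in> A \<Longrightarrow> b \<in> B \<Longrightarrow> \<phi> a b \<in> T"
  shows "(\<Sum>p\<in>T. \<Sum>a\<in>A. \<Sum>b\<in>B. if \<phi> a b = p then G a b p else 0)
       = (\<Sum>a\<in>A. \<Sum>b\<in>B. (G a b (\<phi> a b) :: 'c::comm_monoid_add))"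
proof -
  have "(\<Sum>p\<in>T. \<Sum>a\<in>A. \<Sum>b\<in>B. if \<phi> a b = p then G a b p else 0)
      = (\<Sum>a\<in>A. \<Sum>b\<in>B. \<Sum>p\<in>T. if \<phi> a b = p then G a b p else 0)"
    by (subst sum.swap) (simp add: sum.swap[where A = T])
  also have "\<dots> = (\<Sum>a\<in>A. \<Sum>b\<in>B. G a b (\<phi> a b))"
    using assms by (intro sum.cong refl) (simp add: sum.delta)
  finally show ?thesis .
qed

lemma sum_guarded_mult_right:
  fixes F :: "'a \<Rightarrow> 'b \<Rightarrow> 'c::comm_semiring_0"
  shows "(\<Sum>c\<in>C. if P c then (\<Sum>a\<in>A. \<Sum>b\<in>B. if R a b then F a b else 0) * h c else 0)
   = (\<Sum>a\<in>A. \<Sum>b\<in>B. if R a b then (\<Sum>c\<in>C. if P c then F a b * h c else 0) else 0)"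
proof -
  have "(\<Sum>c\<in>C. if P c then (\<Sum>a\<in>A. \<Sum>b\<in>B. if R a b then F a b else 0) * h c else 0)
     = (\<Sum>c\<in>C. \<Sum>a\<in>A. \<Sum>b\<in>B. if P c \<and> R a b then F a b * h c else 0)"
    by (intro sum.cong refl) (auto simp: sum_distrib_right intro!: sum.cong)
  also have "\<dots> = (\<Sum>a\<in>A. \<Sum>b\<in>B. \<Sum>c\<in>C. if P c \<and> R a b then F a b * h c else 0)"
    by (subst sum.swap) (simp add: sum.swap[where A = C])
  also have "\<dots> = (\<Sum>a\<in>A. \<Sum>b\<in>B. if R a b then (\<Sum>c\<in>C. if P c then F a b * h c else 0) else 0)"
    by (intro sum.cong refl) auto
  finally show ?thesis .
qed

lemma mon_alg_triple_left:
  fixes f g h :: "'m \<Rightarrow> 'k::field"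
  assumes M: "monoid M" and f: "f \<in> carrier (mon_alg M)" and g: "g \<in> carrier (mon_alg M)"
    and h: "h \<in> carrier (mon_alg M)"
  shows "((f \<otimes>\<^bsub>mon_alg M\<^esub> g) \<otimes>\<^bsub>mon_alg M\<^esub> h) z =
    (\<Sum>a\<in>{x. f x \<noteq> 0}. \<Sum>b\<in>{x. g x \<noteq> 0}. \<Sum>c\<in>{x. h x \<noteq> 0}.
       if (a \<otimes>\<^bsub>M\<^esub> b) \<otimes>\<^bsub>M\<^esub> c = z then f a * g b * h c else 0)"
proof -
  let ?A = "{x. f x \<noteq> 0}" and ?B = "{x. g x \<noteq> 0}" and ?C = "{x. h x \<noteq> 0}"
  let ?T = "(\<lambda>(x, y). x \<otimes>\<^bsub>M\<^esub> y) ` (?A \<times> ?B)"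
  have fin: "finite ?A" "finite ?B" "finite ?C" "finite ?T"
    using f g h by (simp_all add: mon_alg_finite_supp)
  have "((f \<otimes>\<^bsub>mon_alg M\<^esub> g) \<otimes>\<^bsub>mon_alg M\<^esub> h) z =
     (\<Sum>p\<in>?T. \<Sum>c\<in>?C. if p \<otimes>\<^bsub>M\<^esub> c = z then (f \<otimes>\<^bsub>mon_alg M\<^esub> g) p * h c else 0)"
    by (rule mon_alg_mult_expand[OF mon_alg_mult_closed[OF M f g] h fin(4) _ fin(3)])
      (use mon_alg_mult_supp[OF f g] in fastforce)+
  also have "\<dots> = (\<Sum>p\<in>?T. \<Sum>a\<in>?A. \<Sum>b\<in>?B. if a \<otimes>\<^bsub>M\<^esub> b = p then
      (\<Sum>c\<in>?C. if p \<otimes>\<^bsub>M\<^esub> c = z then f a * g b * h c else 0) else 0)"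
    using mon_alg_mult_expand[OF f g fin(1) subset_refl fin(2)]
    by (simp only: sum_guarded_mult_right cong: if_cong)
  also have "\<dots> = (\<Sum>a\<in>?A. \<Sum>b\<in>?B. \<Sum>c\<in>?C.
      if (a \<otimes>\<^bsub>M\<^esub> b) \<otimes>\<^bsub>M\<^esub> c = z then f a * g b * h c else 0)"
    by (rule sum_collapse[OF fin(4)]) auto
  finally show ?thesis .
qed

lemma mon_alg_triple_right:
  fixes f g h :: "'m \<Rightarrow> 'k::field"
  assumes M: "monoid M" and f: "f \<in> carrier (mon_alg M)" and g: "g \<in> carrier (mon_alg M)"
    and h: "h \<in> carrier (mon_alg M)"
  shows "(f \<otimes>\<^bsub>mon_alg M\<^esub> (g \<otimes>\<^bsub>mon_alg M\<^esub> h)) z =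
    (\<Sum>a\<in>{x. f x \<noteq> 0}. \<Sum>b\<in>{x. g x \<noteq> 0}. \<Sum>c\<in>{x. h x \<noteq> 0}.
       if a \<otimes>\<^bsub>M\<^esub> (b \<otimes>\<^bsub>M\<^esub> c) = z then f a * g b * h c else 0)"
proof -
  let ?A = "{x. f x \<noteq> 0}" and ?B = "{x. g x \<noteq> 0}" and ?C = "{x. h x \<noteq> 0}"
  let ?T = "(\<lambda>(x, y). x \<otimes>\<^bsub>M\<^esub> y) ` (?B \<times> ?C)"
  have fin: "finite ?A" "finite ?B" "finite ?C" "finite ?T"
    using f g h by (simp_all add: mon_alg_finite_supp)
  have "(f \<otimes>\<^bsub>mon_alg M\<^esub> (g \<otimes>\<^bsub>mon_alg M\<^esub> h)) z =
     (\<Sum>a\<in>?A. \<Sum>q\<in>?T. if a \<otimes>\<^bsub>M\<^esub> q = z then f a * (g \<otimes>\<^bsub>mon_alg M\<^esub> h) q else 0)"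
    by (rule mon_alg_mult_expand[OF f mon_alg_mult_closed[OF M g h] fin(1) _ fin(4)])
      (use mon_alg_mult_supp[OF g h] in fastforce)+
  also have "\<dots> = (\<Sum>a\<in>?A. \<Sum>q\<in>?T. \<Sum>b\<in>?B. \<Sum>c\<in>?C. if b \<otimes>\<^bsub>M\<^esub> c = q then
      (if a \<otimes>\<^bsub>M\<^esub> q = z then f a * g b * h c else 0) else 0)"
    by (intro sum.cong refl)
      (auto simp: mon_alg_mult_expand[OF g h fin(2) _ fin(3)] sum_distrib_left mult.assoc
            intro!: sum.cong cong: if_cong)
  also have "\<dots> = (\<Sum>a\<in>?A. \<Sum>b\<in>?B. \<Sum>c\<in>?C.
      if a \<otimes>\<^bsub>M\<^esub> (b \<otimes>\<^bsub>M\<^esub> c) = z then f a * g b * h c else 0)"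
    by (intro sum.cong refl sum_collapse[OF fin(4)]) auto
  finally show ?thesis .
qed

lemma mon_alg_mult_assoc:
  fixes f g h :: "'m \<Rightarrow> 'k::field"
  assumes M: "monoid M" and f: "f \<in> carrier (mon_alg M)" and g: "g \<in> carrier (mon_alg M)"
    and h: "h \<in> carrier (mon_alg M)"
  shows "(f \<otimes>\<^bsub>mon_alg M\<^esub> g) \<otimes>\<^bsub>mon_alg M\<^esub> h = f \<otimes>\<^bsub>mon_alg M\<^esub> (g \<otimes>\<^bsub>mon_alg M\<^esub> h)"
proof
  fix z
  show "((f \<otimes>\<^bsub>mon_alg M\<^esub> g) \<otimes>\<^bsub>mon_alg M\<^esub> h) z = (f \<otimes>\<^bsub>mon_alg M\<^esub> (g \<otimes>\<^bsub>mon_alg M\<^esub> h)) z"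
    unfolding mon_alg_triple_left[OF assms] mon_alg_triple_right[OF assms]
    by (intro sum.cong refl)
      (use mon_alg_supp[OF f] mon_alg_supp[OF g] mon_alg_supp[OF h] in \<open>simp add: M monoid.m_assoc\<close>)
qed

lemma mon_alg_one_left:
  fixes f :: "'m \<Rightarrow> 'k::field"
  assumes M: "monoid M" and f: "f \<in> carrier (mon_alg M)"
  shows "\<one>\<^bsub>mon_alg M\<^esub> \<otimes>\<^bsub>mon_alg M\<^esub> f = f"
proof
  fix z
  have "(\<one>\<^bsub>mon_alg M\<^esub> \<otimes>\<^bsub>mon_alg M\<^esub> f) z
      = (\<Sum>a\<in>{\<one>\<^bsub>M\<^esub>}. \<Sum>y\<in>{y. f y \<noteq> 0}. if a \<otimes>\<^bsub>M\<^esub> y = z then \<one>\<^bsub>mon_alg M\<^esub> a * f y else 0)"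
    by (rule mon_alg_mult_expand[OF mon_alg_one_closed[OF M] f])
      (auto simp: mon_alg_one mon_alg_finite_supp[OF f])
  also have "\<dots> = (\<Sum>y\<in>{y. f y \<noteq> 0}. if y = z then f y else 0)"
    using mon_alg_supp[OF f] M by (auto simp: mon_alg_one monoid.l_one intro!: sum.cong)
  also have "\<dots> = f z" using mon_alg_finite_supp[OF f] by (simp add: sum.delta')
  finally show "(\<one>\<^bsub>mon_alg M\<^esub> \<otimes>\<^bsub>mon_alg M\<^esub> f) z = f z" .
qed

lemma mon_alg_one_right:
  fixes f :: "'m \<Rightarrow> 'k::field"
  assumes M: "monoid M" and f: "f \<in> carrier (mon_alg M)"
  shows "f \<otimes>\<^bsub>mon_alg M\<^esub> \<one>\<^bsub>mon_alg M\<^esub> = f"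
proof
  fix z
  have "(f \<otimes>\<^bsub>mon_alg M\<^esub> \<one>\<^bsub>mon_alg M\<^esub>) z
      = (\<Sum>y\<in>{y. f y \<noteq> 0}. \<Sum>a\<in>{\<one>\<^bsub>M\<^esub>}. if y \<otimes>\<^bsub>M\<^esub> a = z then f y * \<one>\<^bsub>mon_alg M\<^esub> a else 0)"
    by (rule mon_alg_mult_expand[OF f mon_alg_one_closed[OF M]])
      (auto simp: mon_alg_one mon_alg_finite_supp[OF f])
  also have "\<dots> = (\<Sum>y\<in>{y. f y \<noteq> 0}. if y = z then f y else 0)"
    using mon_alg_supp[OF f] M by (auto simp: mon_alg_one monoid.r_one intro!: sum.cong)
  also have "\<dots> = f z" using mon_alg_finite_supp[OF f] by (simp add: sum.delta')
  finally show "(f \<otimes>\<^bsub>mon_alg M\<^esub> \<one>\<^bsub>mon_alg M\<^esub>) z = f z" .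
qed

lemma mon_alg_distrib_right:
  fixes f g h :: "'m \<Rightarrow> 'k::field"
  assumes f: "f \<in> carrier (mon_alg M)" and g: "g \<in> carrier (mon_alg M)"
    and h: "h \<in> carrier (mon_alg M)"
  shows "(f \<oplus>\<^bsub>mon_alg M\<^esub> g) \<otimes>\<^bsub>mon_alg M\<^esub> h
       = f \<otimes>\<^bsub>mon_alg M\<^esub> h \<oplus>\<^bsub>mon_alg M\<^esub> g \<otimes>\<^bsub>mon_alg M\<^esub> h"
proof
  fix z
  let ?A = "{a. f a \<noteq> 0} \<union> {a. g a \<noteq> 0}" and ?C = "{c. h c \<noteq> 0}"
  have fin: "finite ?A" "finite ?C" using f g h by (simp_all add: mon_alg_finite_supp)
  have "((f \<oplus>\<^bsub>mon_alg M\<^esub> g) \<otimes>\<^bsub>mon_alg M\<^esub> h) z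
      = (\<Sum>a\<in>?A. \<Sum>c\<in>?C. if a \<otimes>\<^bsub>M\<^esub> c = z then (f a + g a) * h c else 0)"
    by (subst mon_alg_mult_expand[OF mon_alg_add_closed[OF f g] h fin(1) _ fin(2)])
      (auto simp: mon_alg_add cong: if_cong)
  also have "\<dots> = (\<Sum>a\<in>?A. \<Sum>c\<in>?C. (if a \<otimes>\<^bsub>M\<^esub> c = z then f a * h c else 0)
                                     + (if a \<otimes>\<^bsub>M\<^esub> c = z then g a * h c else 0))"
    by (intro sum.cong refl) (simp add: distrib_right)
  also have "\<dots> = (f \<otimes>\<^bsub>mon_alg M\<^esub> h) z + (g \<otimes>\<^bsub>mon_alg M\<^esub> h) z"
    by (simp add: sum.distrib mon_alg_mult_expand[OF f h fin(1) _ fin(2)]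
                  mon_alg_mult_expand[OF g h fin(1) _ fin(2)])
  finally show "((f \<oplus>\<^bsub>mon_alg M\<^esub> g) \<otimes>\<^bsub>mon_alg M\<^esub> h) z
      = (f \<otimes>\<^bsub>mon_alg M\<^esub> h \<oplus>\<^bsub>mon_alg M\<^esub> g \<otimes>\<^bsub>mon_alg M\<^esub> h) z"
    by (simp add: mon_alg_add)
qed

lemma mon_alg_distrib_left:
  fixes f g h :: "'m \<Rightarrow> 'k::field"
  assumes f: "f \<in> carrier (mon_alg M)" and g: "g \<in> carrier (mon_alg M)"
    and h: "h \<in> carrier (mon_alg M)"
  shows "h \<otimes>\<^bsub>mon_alg M\<^esub> (f \<oplus>\<^bsub>mon_alg M\<^esub> g)
       = h \<otimes>\<^bsub>mon_alg M\<^esub> f \<oplus>\<^bsub>mon_alg M\<^esub> h \<otimes>\<^bsub>mon_alg M\<^esub> g"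
proof
  fix z
  let ?A = "{a. f a \<noteq> 0} \<union> {a. g a \<noteq> 0}" and ?C = "{c. h c \<noteq> 0}"
  have fin: "finite ?A" "finite ?C" using f g h by (simp_all add: mon_alg_finite_supp)
  have "(h \<otimes>\<^bsub>mon_alg M\<^esub> (f \<oplus>\<^bsub>mon_alg M\<^esub> g)) z
      = (\<Sum>c\<in>?C. \<Sum>a\<in>?A. if c \<otimes>\<^bsub>M\<^esub> a = z then h c * (f a + g a) else 0)"
    by (subst mon_alg_mult_expand[OF h mon_alg_add_closed[OF f g] fin(2) _ fin(1)])
      (auto simp: mon_alg_add cong: if_cong)
  also have "\<dots> = (\<Sum>c\<in>?C. \<Sum>a\<in>?A. (if c \<otimes>\<^bsub>M\<^esub> a = z then h c * f a else 0)
                                     + (if c \<otimes>\<^bsub>M\<^esub> a = z then h c * g a else 0))"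
    by (intro sum.cong refl) (simp add: distrib_left)
  also have "\<dots> = (h \<otimes>\<^bsub>mon_alg M\<^esub> f) z + (h \<otimes>\<^bsub>mon_alg M\<^esub> g) z"
    by (simp add: sum.distrib mon_alg_mult_expand[OF h f fin(2) _ fin(1)]
                  mon_alg_mult_expand[OF h g fin(2) _ fin(1)])
  finally show "(h \<otimes>\<^bsub>mon_alg M\<^esub> (f \<oplus>\<^bsub>mon_alg M\<^esub> g)) z
      = (h \<otimes>\<^bsub>mon_alg M\<^esub> f \<oplus>\<^bsub>mon_alg M\<^esub> h \<otimes>\<^bsub>mon_alg M\<^esub> g) z"
    by (simp add: mon_alg_add)
qed

lemma mon_alg_ring:
  assumes M: "monoid M"
  shows "ring (mon_alg M :: ('m \<Rightarrow> 'k::field) ring)"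
proof (rule ringI)
  let ?R = "mon_alg M :: ('m \<Rightarrow> 'k) ring"
  show "abelian_group ?R"
  proof (rule abelian_groupI)
    show "\<exists>y\<in>carrier ?R. y \<oplus>\<^bsub>?R\<^esub> x = \<zero>\<^bsub>?R\<^esub>" if "x \<in> carrier ?R" for x
      by (rule bexI[of _ "\<lambda>z. - x z"])
        (use that in \<open>auto simp: mon_alg_add mon_alg_zero mon_alg_carrier_iff\<close>)
    show "x \<oplus>\<^bsub>?R\<^esub> y \<in> carrier ?R" if "x \<in> carrier ?R" "y \<in> carrier ?R" for x y
      using that by (rule mon_alg_add_closed)
  qed (auto simp: mon_alg_add mon_alg_zero mon_alg_carrier_iff add.assoc add.commute)
  show "monoid ?R"
    by (rule monoidI)
      (simp_all add: M mon_alg_mult_closed mon_alg_one_closed mon_alg_mult_assoc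
                     mon_alg_one_left mon_alg_one_right)
qed (simp_all add: mon_alg_distrib_left mon_alg_distrib_right)

lemma mon_alg_neg:
  assumes M: "monoid M" and f: "f \<in> carrier (mon_alg M :: ('m \<Rightarrow> 'k::field) ring)"
  shows "\<ominus>\<^bsub>mon_alg M\<^esub> f = (\<lambda>z. - f z)"
proof -
  interpret R: ring "mon_alg M :: ('m \<Rightarrow> 'k) ring" by (rule mon_alg_ring[OF M])
  show ?thesis
    by (rule R.minus_equality) (use f in \<open>auto simp: mon_alg_add mon_alg_zero mon_alg_carrier_iff\<close>)
qed

lemma smult_fun_closed:
  "f \<in> carrier (mon_alg M) \<Longrightarrow> smult_fun k (f :: 'm \<Rightarrow> 'k::field) \<in> carrier (mon_alg M)"
proof -
  assume f: "f \<in> carrier (mon_alg M)"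
  have "{x. k * f x \<noteq> 0} \<subseteq> {x. f x \<noteq> 0}" by auto
  then have "finite {x. k * f x \<noteq> 0}" using f by (auto simp: mon_alg_finite_supp intro: finite_subset)
  then show ?thesis using f by (auto simp: mon_alg_carrier_iff smult_fun_def)
qed

lemma span_in_ideal:
  assumes M: "monoid M" and I: "I \<subseteq> carrier M"
    and absorb: "\<And>q s. q \<in> I \<Longrightarrow> s \<in> carrier M \<Longrightarrow> q \<otimes>\<^bsub>M\<^esub> s \<in> I \<and> s \<otimes>\<^bsub>M\<^esub> q \<in> I"
  shows "ideal (span_in M I) (mon_alg M :: ('m \<Rightarrow> 'k::field) ring)"
proof -
  interpret R: ring "mon_alg M :: ('m \<Rightarrow> 'k) ring" by (rule mon_alg_ring[OF M])
  have sub: "span_in M I \<subseteq> carrier (mon_alg M :: ('m \<Rightarrow> 'k) ring)" by (auto simp: span_in_def)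
  have absorb_mult: "f \<otimes>\<^bsub>mon_alg M\<^esub> g \<in> span_in M I"
    if f: "f \<in> carrier (mon_alg M)" and g: "g \<in> carrier (mon_alg M)"
      and prod: "\<And>x y. f x \<noteq> 0 \<Longrightarrow> g y \<noteq> 0 \<Longrightarrow> x \<otimes>\<^bsub>M\<^esub> y \<in> I" for f g :: "'m \<Rightarrow> 'k"
  proof -
    have "z \<in> I" if "(f \<otimes>\<^bsub>mon_alg M\<^esub> g) z \<noteq> 0" for z
      using mon_alg_mult_supp[OF f g that] prod by blast
    then show ?thesis using mon_alg_mult_closed[OF M f g] by (simp add: span_in_def)
  qed
  show ?thesis
  proof (rule idealI)
    show "ring (mon_alg M :: ('m \<Rightarrow> 'k) ring)" by (rule R.ring_axioms)
    show "subgroup (span_in M I) (add_monoid (mon_alg M :: ('m \<Rightarrow> 'k) ring))"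
    proof (rule R.add.subgroupI)
      show "span_in M I \<subseteq> carrier (mon_alg M :: ('m \<Rightarrow> 'k) ring)" by (rule sub)
      have "(\<lambda>_. 0) \<in> (span_in M I :: ('m \<Rightarrow> 'k) set)" by (simp add: span_in_def mon_alg_carrier_iff)
      then show "span_in M I \<noteq> ({} :: ('m \<Rightarrow> 'k) set)" by blast
      show "\<ominus>\<^bsub>mon_alg M\<^esub> f \<in> span_in M I" if f: "f \<in> span_in M I" for f :: "'m \<Rightarrow> 'k"
      proof -
        have fc: "f \<in> carrier (mon_alg M)" using f sub by blast
        show ?thesis
          using f unfolding mon_alg_neg[OF M fc] by (simp add: span_in_def mon_alg_carrier_iff)
      qed
      show "f \<oplus>\<^bsub>mon_alg M\<^esub> g \<in> span_in M I" if f: "f \<in> span_in M I" and g: "g \<in> span_in M I"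
        for f g :: "'m \<Rightarrow> 'k"
      proof -
        have "f \<oplus>\<^bsub>mon_alg M\<^esub> g \<in> carrier (mon_alg M)"
          by (rule mon_alg_add_closed) (use f g sub in blast)+
        moreover have "x \<in> I" if "f x + g x \<noteq> 0" for x
          using that f g by (cases "f x = 0") (auto simp: span_in_def)
        ultimately show ?thesis by (simp add: span_in_def mon_alg_add)
      qed
    qed
    show "x \<otimes>\<^bsub>mon_alg M\<^esub> f \<in> span_in M I"
      if f: "f \<in> span_in M I" and x: "x \<in> carrier (mon_alg M :: ('m \<Rightarrow> 'k) ring)" for f x :: "'m \<Rightarrow> 'k"
    proof (rule absorb_mult[OF x])
      show "f \<in> carrier (mon_alg M)" using f sub by blast
      fix a b assume "x a \<noteq> 0" "f b \<noteq> 0"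
      then have "a \<in> carrier M" "b \<in> I" using mon_alg_supp[OF x] f by (auto simp: span_in_def)
      then show "a \<otimes>\<^bsub>M\<^esub> b \<in> I" using absorb by blast
    qed
    show "f \<otimes>\<^bsub>mon_alg M\<^esub> x \<in> span_in M I"
      if f: "f \<in> span_in M I" and x: "x \<in> carrier (mon_alg M :: ('m \<Rightarrow> 'k) ring)" for f x :: "'m \<Rightarrow> 'k"
    proof (rule absorb_mult[OF _ x])
      show "f \<in> carrier (mon_alg M)" using f sub by blast
      fix a b assume "f a \<noteq> 0" "x b \<noteq> 0"
      then have "a \<in> I" "b \<in> carrier M" using mon_alg_supp[OF x] f by (auto simp: span_in_def)
      then show "a \<otimes>\<^bsub>M\<^esub> b \<in> I" using absorb by blast
    qed
  qed
qed

lemma span_in_coset_eq_iff: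
  fixes f g :: "'m \<Rightarrow> 'k::field"
  assumes M: "monoid M" and I: "ideal (span_in M I) (mon_alg M :: ('m \<Rightarrow> 'k) ring)"
    and f: "f \<in> carrier (mon_alg M)" and g: "g \<in> carrier (mon_alg M)"
  shows "span_in M I +>\<^bsub>mon_alg M\<^esub> f = span_in M I +>\<^bsub>mon_alg M\<^esub> g
     \<longleftrightarrow> (\<forall>x. f x \<noteq> g x \<longrightarrow> x \<in> I)"
proof -
  interpret R: ring "mon_alg M :: ('m \<Rightarrow> 'k) ring" by (rule mon_alg_ring[OF M])
  have diff: "f \<ominus>\<^bsub>mon_alg M\<^esub> g = (\<lambda>z. f z - g z)"
    unfolding a_minus_def mon_alg_neg[OF M g] mon_alg_add by simp
  have "span_in M I +>\<^bsub>mon_alg M\<^esub> f = span_in M I +>\<^bsub>mon_alg M\<^esub> g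
      \<longleftrightarrow> f \<ominus>\<^bsub>mon_alg M\<^esub> g \<in> span_in M I"
    using R.quotient_eq_iff_same_a_r_cos[OF I f g] by simp
  also have "\<dots> \<longleftrightarrow> (\<forall>x. f x \<noteq> g x \<longrightarrow> x \<in> I)"
    using R.minus_closed[OF f g] unfolding span_in_def diff by auto
  finally show ?thesis .
qed

lemma prime_ring_quotient:
  assumes P: "nc_prime_ideal I R"
  shows "prime_ring (R Quot I)"
proof -
  have I: "ideal I R" using P by (simp add: nc_prime_ideal_def)
  interpret R: ring R using I by (rule ideal.axioms(2))
  interpret Q: ring "R Quot I" using I by (rule ideal.quotient_is_ring)
  have hom: "(+>\<^bsub>R\<^esub>) I \<in> ring_hom R (R Quot I)" by (rule ideal.rcos_ring_hom[OF I])
  have zero: "\<zero>\<^bsub>R Quot I\<^esub> = I" by (simp add: FactRing_def)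
  have coset_zero_iff: "I +>\<^bsub>R\<^esub> a = I \<longleftrightarrow> a \<in> I" if "a \<in> carrier R" for a
    using ideal.rcos_const_imp_mem[OF I that] R.a_rcos_zero[OF I] by blast
  have "\<one>\<^bsub>R\<^esub> \<notin> I"
    using P ideal.one_imp_carrier[OF I] by (auto simp: nc_prime_ideal_def)
  then have "\<one>\<^bsub>R Quot I\<^esub> \<noteq> \<zero>\<^bsub>R Quot I\<^esub>"
    using ring_hom_one[OF hom] coset_zero_iff[OF R.one_closed] zero by simp
  then have nontrivial: "carrier (R Quot I) \<noteq> {\<zero>\<^bsub>R Quot I\<^esub>}"
    using Q.carrier_one_zero by simp
  have prime: "a = \<zero>\<^bsub>R Quot I\<^esub> \<or> b = \<zero>\<^bsub>R Quot I\<^esub>"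
    if a: "a \<in> carrier (R Quot I)" and b: "b \<in> carrier (R Quot I)"
      and abs: "\<forall>r\<in>carrier (R Quot I). a \<otimes>\<^bsub>R Quot I\<^esub> r \<otimes>\<^bsub>R Quot I\<^esub> b = \<zero>\<^bsub>R Quot I\<^esub>" for a b
  proof -
    obtain a' b' where a': "a' \<in> carrier R" "a = I +>\<^bsub>R\<^esub> a'"
      and b': "b' \<in> carrier R" "b = I +>\<^bsub>R\<^esub> b'"
      using a b unfolding FactRing_def A_RCOSETS_def' by auto
    have "a' \<otimes>\<^bsub>R\<^esub> r \<otimes>\<^bsub>R\<^esub> b' \<in> I" if r: "r \<in> carrier R" for r
    proof -
      have "I +>\<^bsub>R\<^esub> (a' \<otimes>\<^bsub>R\<^esub> r \<otimes>\<^bsub>R\<^esub> b') = a \<otimes>\<^bsub>R Quot I\<^esub> (I +>\<^bsub>R\<^esub> r) \<otimes>\<^bsub>R Quot I\<^esub> b"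
        using a' b' r by (simp add: ring_hom_mult[OF hom])
      also have "\<dots> = I" using abs ring_hom_closed[OF hom r] zero by simp
      finally show ?thesis using coset_zero_iff a' b' r by simp
    qed
    then have "a' \<in> I \<or> b' \<in> I" using P a'(1) b'(1) by (simp add: nc_prime_ideal_def)
    then show ?thesis using coset_zero_iff a' b' zero by auto
  qed
  show ?thesis unfolding prime_ring_def
    by (intro conjI ballI impI ideal.quotient_is_ring[OF I] nontrivial prime) blast+
qed

lemma (in ring_hom_ring) kernel_nc_prime:
  assumes surj: "h ` carrier R = carrier S" and prime: "prime_ring S"
  shows "nc_prime_ideal (a_kernel R S h) R"
  unfolding nc_prime_ideal_def
proof (intro conjI ballI impI)
  show "ideal (a_kernel R S h) R" by (rule kernel_is_ideal)
  have "carrier S \<noteq> {\<zero>\<^bsub>S\<^esub>}" using prime by (simp add: prime_ring_def)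
  then have "h \<one>\<^bsub>R\<^esub> \<noteq> \<zero>\<^bsub>S\<^esub>" using S.carrier_one_not_zero by simp
  then show "a_kernel R S h \<noteq> carrier R" unfolding a_kernel_def' by blast
next
  fix a b assume a: "a \<in> carrier R" and b: "b \<in> carrier R"
    and abs: "\<forall>r\<in>carrier R. a \<otimes>\<^bsub>R\<^esub> r \<otimes>\<^bsub>R\<^esub> b \<in> a_kernel R S h"
  have "h a \<otimes>\<^bsub>S\<^esub> s \<otimes>\<^bsub>S\<^esub> h b = \<zero>\<^bsub>S\<^esub>" if s: "s \<in> carrier S" for s
  proof -
    have "s \<in> h ` carrier R" using s surj by simp
    then obtain r where r: "r \<in> carrier R" "s = h r" by blast
    then have "h a \<otimes>\<^bsub>S\<^esub> s \<otimes>\<^bsub>S\<^esub> h b = h (a \<otimes>\<^bsub>R\<^esub> r \<otimes>\<^bsub>R\<^esub> b)" using a b by simp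
    also have "\<dots> = \<zero>\<^bsub>S\<^esub>" using abs r(1) unfolding a_kernel_def' by blast
    finally show ?thesis .
  qed
  moreover have "h a \<in> carrier S" "h b \<in> carrier S" using a b by simp_all
  ultimately have "h a = \<zero>\<^bsub>S\<^esub> \<or> h b = \<zero>\<^bsub>S\<^esub>"
    using prime unfolding prime_ring_def by blast
  then show "a \<in> a_kernel R S h \<or> b \<in> a_kernel R S h"
    using a b unfolding a_kernel_def' by blast
qed

section \<open>Prime monomial algebras\<close>

text \<open>The free algebra K<x_1..x_m> is the monoid algebra of the free monoid.\<close>
lemma free_mon_carrier [simp]: "carrier (free_mon m) = words m" by (simp add: free_mon_def)
lemma free_mon_mult [simp]: "x \<otimes>\<^bsub>free_mon m\<^esub> y = x @ y" by (simp add: free_mon_def)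
lemma free_mon_one [simp]: "\<one>\<^bsub>free_mon m\<^esub> = []" by (simp add: free_mon_def)

lemma words_append [simp]: "u @ v \<in> words n \<longleftrightarrow> u \<in> words n \<and> v \<in> words n"
  by (auto simp: words_def)
lemma words_Cons [simp]: "j # v \<in> words n \<longleftrightarrow> j < n \<and> v \<in> words n"
  by (auto simp: words_def)
lemma words_Nil [simp]: "[] \<in> words n" by (simp add: words_def)

lemma monoid_free_mon: "monoid (free_mon m)"
  by (rule monoidI) auto

lemma word_ideal_closed:
  "word_ideal m W \<Longrightarrow> w \<in> W \<Longrightarrow> x \<in> words m \<Longrightarrow> y \<in> words m \<Longrightarrow> x @ w @ y \<in> W"
  by (simp add: word_ideal_def)

lemma word_ideal_span_ideal:
  assumes W: "word_ideal m W"
  shows "ideal (span_in (free_mon m) W) (mon_alg (free_mon m) :: (nat list \<Rightarrow> 'k::field) ring)"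
proof (rule span_in_ideal[OF monoid_free_mon])
  show "W \<subseteq> carrier (free_mon m)" using W by (simp add: word_ideal_def)
  show "q \<otimes>\<^bsub>free_mon m\<^esub> s \<in> W \<and> s \<otimes>\<^bsub>free_mon m\<^esub> q \<in> W"
    if "q \<in> W" "s \<in> carrier (free_mon m)" for q s
    using word_ideal_closed[OF W that(1), of "[]" s] word_ideal_closed[OF W that(1), of s "[]"] that(2)
    by simp
qed

lemma longest_word:
  assumes "finite U" "U \<noteq> {}"
  obtains u :: "'a list" where "u \<in> U" "\<And>a. a \<in> U \<Longrightarrow> length a \<le> length u"
proof -
  have "Max (length ` U) \<in> length ` U" using assms by simp
  then obtain u where "u \<in> U" "length u = Max (length ` U)" by auto
  then show ?thesis using that assms by simp
qed

text \<open>Leading coefficient: if u and v are longest words outside W in the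
  supports of f and g, and u s v lies outside W, then the only factorisation
  a s c of u s v contributing to f s g with a, c in the supports is u s v itself.\<close>
lemma word_ideal_leading_coeff:
  fixes f g :: "nat list \<Rightarrow> 'k::field"
  assumes W: "word_ideal m W"
    and f: "f \<in> carrier (mon_alg (free_mon m))" and g: "g \<in> carrier (mon_alg (free_mon m))"
    and u: "f u \<noteq> 0" "\<And>a. f a \<noteq> 0 \<Longrightarrow> a \<notin> W \<Longrightarrow> length a \<le> length u"
    and v: "g v \<noteq> 0" "\<And>c. g c \<noteq> 0 \<Longrightarrow> c \<notin> W \<Longrightarrow> length c \<le> length v"
    and s: "s \<in> words m" "u @ s @ v \<notin> W"
  defines "r \<equiv> \<lambda>x. if x = s then 1 else 0"
  shows "(f \<otimes>\<^bsub>mon_alg (free_mon m)\<^esub> r \<otimes>\<^bsub>mon_alg (free_mon m)\<^esub> g) (u @ s @ v) = f u * g v"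
proof -
  let ?A = "{x. f x \<noteq> 0}" and ?C = "{x. g x \<noteq> 0}"
  have r: "r \<in> carrier (mon_alg (free_mon m))" using s(1) by (auto simp: mon_alg_carrier_iff r_def)
  have supp_r: "{x. r x \<noteq> 0} = {s}" by (auto simp: r_def)
  have only: "a = u \<and> c = v" if a: "a \<in> ?A" and c: "c \<in> ?C" and e: "a @ s @ c = u @ s @ v" for a c
  proof -
    have "a \<in> words m" "c \<in> words m" using a c mon_alg_supp[OF f] mon_alg_supp[OF g] by auto
    then have "a \<notin> W" "c \<notin> W"
      using word_ideal_closed[OF W, of a "[]" "s @ c"] word_ideal_closed[OF W, of c "a @ s" "[]"] e s
      by auto
    then have "length a \<le> length u" "length c \<le> length v" using u(2) v(2) a c by auto
    moreover have "length a + length c = length u + length v" using arg_cong[OF e, of length] by simp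
    ultimately have "length a = length u" by simp
    then show ?thesis using e by (simp add: append_eq_append_conv)
  qed
  have "(f \<otimes>\<^bsub>mon_alg (free_mon m)\<^esub> r \<otimes>\<^bsub>mon_alg (free_mon m)\<^esub> g) (u @ s @ v)
      = (\<Sum>a\<in>?A. \<Sum>c\<in>?C. if a @ s @ c = u @ s @ v then f a * g c else 0)"
    unfolding mon_alg_triple_left[OF monoid_free_mon f r g] supp_r by (simp add: r_def cong: if_cong)
  also have "\<dots> = (\<Sum>a\<in>?A. if a = u then f u * g v else 0)"
  proof (rule sum.cong[OF refl])
    fix a assume a: "a \<in> ?A"
    have "(\<Sum>c\<in>?C. if a @ s @ c = u @ s @ v then f a * g c else 0)
        = (\<Sum>c\<in>?C. if a = u \<and> c = v then f u * g v else 0)"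
      using only[OF a] by (intro sum.cong refl) auto
    then show "(\<Sum>c\<in>?C. if a @ s @ c = u @ s @ v then f a * g c else 0)
        = (if a = u then f u * g v else 0)"
      using v(1) mon_alg_finite_supp[OF g] by (simp add: sum.delta' cong: if_cong)
  qed
  also have "\<dots> = f u * g v" using u(1) mon_alg_finite_supp[OF f] by (simp add: sum.delta')
  finally show ?thesis .
qed

text \<open>Witness: the longest words outside W in the supports.\<close>
lemma word_ideal_nc_prime:
  assumes W: "word_ideal m W" and nil: "[] \<notin> W"
    and join: "\<And>u v. u \<in> words m - W \<Longrightarrow> v \<in> words m - W \<Longrightarrow> \<exists>s\<in>words m. u @ s @ v \<notin> W"
  shows "nc_prime_ideal (span_in (free_mon m) W) (mon_alg (free_mon m) :: (nat list \<Rightarrow> 'k::field) ring)"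
  unfolding nc_prime_ideal_def
proof (intro conjI ballI impI)
  let ?F = "mon_alg (free_mon m) :: (nat list \<Rightarrow> 'k) ring"
  show "ideal (span_in (free_mon m) W) ?F" using W by (rule word_ideal_span_ideal)
  have "\<one>\<^bsub>?F\<^esub> \<notin> span_in (free_mon m) W" using nil by (auto simp: span_in_def mon_alg_one)
  then show "span_in (free_mon m) W \<noteq> carrier ?F"
    using mon_alg_one_closed[OF monoid_free_mon] by blast
next
  let ?F = "mon_alg (free_mon m) :: (nat list \<Rightarrow> 'k) ring"
  fix f g assume f: "f \<in> carrier ?F" and g: "g \<in> carrier ?F"
    and abs: "\<forall>r\<in>carrier ?F. f \<otimes>\<^bsub>?F\<^esub> r \<otimes>\<^bsub>?F\<^esub> g \<in> span_in (free_mon m) W"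
  show "f \<in> span_in (free_mon m) W \<or> g \<in> span_in (free_mon m) W"
  proof (rule ccontr)
    let ?U = "{w. f w \<noteq> 0 \<and> w \<notin> W}" and ?V = "{w. g w \<noteq> 0 \<and> w \<notin> W}"
    assume "\<not> ?thesis"
    then have nonempty: "?U \<noteq> {}" "?V \<noteq> {}" using f g by (auto simp: span_in_def)
    have fin: "finite ?U" "finite ?V"
      using mon_alg_finite_supp[OF f] mon_alg_finite_supp[OF g] by (auto intro: finite_subset)
    obtain u where u: "u \<in> ?U" "\<And>a. a \<in> ?U \<Longrightarrow> length a \<le> length u"
      using longest_word[OF fin(1) nonempty(1)] by blast
    obtain v where v: "v \<in> ?V" "\<And>c. c \<in> ?V \<Longrightarrow> length c \<le> length v"
      using longest_word[OF fin(2) nonempty(2)] by blast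
    have "u \<in> words m" "v \<in> words m" using u(1) v(1) mon_alg_supp[OF f] mon_alg_supp[OF g] by auto
    then obtain s where s: "s \<in> words m" "u @ s @ v \<notin> W" using join u(1) v(1) by blast
    define r :: "nat list \<Rightarrow> 'k" where "r = (\<lambda>x. if x = s then 1 else 0)"
    have r: "r \<in> carrier ?F" using s(1) by (auto simp: mon_alg_carrier_iff r_def)
    have "(f \<otimes>\<^bsub>?F\<^esub> r \<otimes>\<^bsub>?F\<^esub> g) (u @ s @ v) = f u * g v"
      unfolding r_def by (rule word_ideal_leading_coeff[OF W f g _ _ _ _ s]) (use u v in auto)
    then have "(f \<otimes>\<^bsub>?F\<^esub> r \<otimes>\<^bsub>?F\<^esub> g) (u @ s @ v) \<noteq> 0" using u(1) v(1) by simp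
    then have "f \<otimes>\<^bsub>?F\<^esub> r \<otimes>\<^bsub>?F\<^esub> g \<notin> span_in (free_mon m) W"
      using s(2) unfolding span_in_def by blast
    with abs r show False by blast
  qed
qed

section \<open>The monoid S_n\<close>

abbreviation cls :: "nat \<Rightarrow> nat list \<Rightarrow> nat list set" where
  "cls n w \<equiv> Sn_cong n `` {w}"

lemma upt_words [simp]: "j \<le> n \<Longrightarrow> [i..<j] \<in> words n"
  by (auto simp: words_def)

lemma take_drop_words: "w \<in> words n \<Longrightarrow> take i w \<in> words n \<and> drop i w \<in> words n"
  by (auto simp: words_def dest: in_set_takeD in_set_dropD)

lemma Sn_rel0_words: "(x, y) \<in> Sn_rel0 n \<Longrightarrow> x \<in> words n \<and> y \<in> words n"
  by (auto simp: Sn_rel0_def words_def)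

lemma Sn_rel0_length: "(x, y) \<in> Sn_rel0 n \<Longrightarrow> length x = length y"
  by (auto simp: Sn_rel0_def)

lemma Sn_cong_equiv: "equiv UNIV (Sn_cong n)"
  unfolding Sn_cong_def
  by (rule equivI) (auto simp: refl_rtrancl sym_rtrancl sym_Un_converse intro: trans_rtrancl)

lemma Sn_cong_sym: "(x, y) \<in> Sn_cong n \<Longrightarrow> (y, x) \<in> Sn_cong n"
  using Sn_cong_equiv[of n] by (meson equivE symD)

lemma Sn_cong_trans: "(x, y) \<in> Sn_cong n \<Longrightarrow> (y, z) \<in> Sn_cong n \<Longrightarrow> (x, z) \<in> Sn_cong n"
  unfolding Sn_cong_def by (rule rtrancl_trans)

lemma Sn_cong_words: "(x, y) \<in> Sn_cong n \<Longrightarrow> x \<in> words n \<Longrightarrow> y \<in> words n"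
  unfolding Sn_cong_def by (induction rule: rtrancl_induct) (auto dest: Sn_rel0_words)

lemma Sn_cong_length: "(x, y) \<in> Sn_cong n \<Longrightarrow> length x = length y"
  unfolding Sn_cong_def by (induction rule: rtrancl_induct) (auto dest: Sn_rel0_length)

lemma Sn_cong_refl [simp]: "(x, x) \<in> Sn_cong n"
  by (simp add: Sn_cong_def)

lemma cls_self: "x \<in> cls n x"
  by simp

lemma cls_eq_iff: "cls n x = cls n y \<longleftrightarrow> (x, y) \<in> Sn_cong n"
  using equiv_class_eq_iff[OF Sn_cong_equiv, of x y n] by auto

lemma cls_Nil_iff: "cls n w = cls n [] \<longleftrightarrow> w = []"
  using Sn_cong_length[of w "[]" n] by (auto simp: cls_eq_iff)

lemma Sn_rel0_context:
  assumes "(x, y) \<in> Sn_rel0 n" "u \<in> words n" "v \<in> words n"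
  shows "(u @ x @ v, u @ y @ v) \<in> Sn_rel0 n"
proof -
  from assms(1) obtain u0 v0 k where e: "x = u0 @ [0..<n] @ v0" "y = u0 @ rotate k [0..<n] @ v0"
    "u0 \<in> words n" "v0 \<in> words n" "k < n"
    by (auto simp: Sn_rel0_def)
  show ?thesis unfolding Sn_rel0_def
    by (rule CollectI, rule exI[of _ "u @ u0"], rule exI[of _ "v0 @ v"], rule exI[of _ k])
      (use e assms in auto)
qed

lemma Sn_cong_context:
  assumes "(x, y) \<in> Sn_cong n" "u \<in> words n" "v \<in> words n"
  shows "(u @ x @ v, u @ y @ v) \<in> Sn_cong n"
  using assms(1) unfolding Sn_cong_def
proof (induction rule: rtrancl_induct)
  case (step b c)
  then have "(u @ b @ v, u @ c @ v) \<in> Sn_rel0 n \<union> (Sn_rel0 n)\<inverse>"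
    using Sn_rel0_context[OF _ assms(2,3)] by auto
  with step.IH show ?case by (rule rtrancl_into_rtrancl)
qed simp

lemma Sn_cong_append:
  assumes "(x, y) \<in> Sn_cong n" "(x', y') \<in> Sn_cong n" "x \<in> words n" "x' \<in> words n"
  shows "(x @ x', y @ y') \<in> Sn_cong n"
proof -
  have "(x @ x', y @ x') \<in> Sn_cong n" using Sn_cong_context[OF assms(1), of "[]" x'] assms by simp
  moreover have "(y @ x', y @ y') \<in> Sn_cong n"
    using Sn_cong_context[OF assms(2), of y "[]"] Sn_cong_words[OF assms(1,3)] by simp
  ultimately show ?thesis by (rule Sn_cong_trans)
qed

lemma carrier_Sn: "carrier (Sn n) = cls n ` words n"
  by (auto simp: Sn_def quotient_def)

lemma one_Sn: "\<one>\<^bsub>Sn n\<^esub> = cls n []"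
  by (simp add: Sn_def)

lemma mult_Sn:
  assumes x: "x \<in> words n" and y: "y \<in> words n"
  shows "cls n x \<otimes>\<^bsub>Sn n\<^esub> cls n y = cls n (x @ y)"
proof -
  let ?a = "SOME w. w \<in> cls n x" and ?b = "SOME w. w \<in> cls n y"
  have "?a \<in> cls n x" by (rule someI[of _ x]) (rule cls_self)
  moreover have "?b \<in> cls n y" by (rule someI[of _ y]) (rule cls_self)
  ultimately have "(x @ y, ?a @ ?b) \<in> Sn_cong n" using x y by (intro Sn_cong_append) auto
  then have "cls n (?a @ ?b) = cls n (x @ y)" using cls_eq_iff Sn_cong_sym by metis
  then show ?thesis by (simp add: Sn_def)
qed

lemma monoid_Sn: "monoid (Sn n)"
  by (rule monoidI) (auto simp: carrier_Sn mult_Sn one_Sn)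

lemma Sn_rotation:
  "k < n \<Longrightarrow> u \<in> words n \<Longrightarrow> v \<in> words n \<Longrightarrow>
     (u @ [0..<n] @ v, u @ rotate k [0..<n] @ v) \<in> Sn_cong n"
  unfolding Sn_cong_def Sn_rel0_def by (rule r_into_rtrancl) blast

lemma rotate_upt: "j < n \<Longrightarrow> rotate j [0..<n] = [j..<n] @ [0..<j]"
  by (simp add: rotate_drop_take take_upt)

lemma Sn_rotation_upt: "j < n \<Longrightarrow> ([0..<n], [j..<n] @ [0..<j]) \<in> Sn_cong n"
  using Sn_rotation[of j n "[]" "[]"] by (simp add: rotate_upt)

text \<open>Moving the letter j from the front of the word to its end: the rotation
  by j + 1 gives a_1 ... a_n = a_(j+2) ... a_n a_1 ... a_(j+1).\<close>
lemma Sn_rotation_last: "j < n \<Longrightarrow> ([0..<n], [Suc j..<n] @ [0..<j] @ [j]) \<in> Sn_cong n"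
proof (cases "Suc j < n")
  case True
  then show ?thesis using Sn_rotation_upt[OF True] by simp
next
  case False
  moreover assume "j < n"
  ultimately have "n = Suc j" by simp
  then show ?thesis by simp
qed

lemma Sn_letter_commutes:
  assumes j: "j < n"
  shows "([j] @ [0..<n], [0..<n] @ [j]) \<in> Sn_cong n"
proof -
  have 1: "([j] @ [0..<n] @ [], [j] @ ([Suc j..<n] @ [0..<j] @ [j]) @ []) \<in> Sn_cong n"
    by (rule Sn_cong_context[OF Sn_rotation_last[OF j]]) (use j in auto)
  have e: "[j] @ ([Suc j..<n] @ [0..<j] @ [j]) @ [] = [] @ ([j..<n] @ [0..<j]) @ [j]"
    using j by (simp add: upt_conv_Cons)
  have 2: "([] @ ([j..<n] @ [0..<j]) @ [j], [] @ [0..<n] @ [j]) \<in> Sn_cong n"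
    by (rule Sn_cong_context[OF Sn_cong_sym[OF Sn_rotation_upt[OF j]]]) (use j in auto)
  show ?thesis using Sn_cong_trans[OF 1[unfolded e] 2] by simp
qed

lemma Sn_top_central: "v \<in> words n \<Longrightarrow> (v @ [0..<n], [0..<n] @ v) \<in> Sn_cong n"
proof (induction v)
  case (Cons j v)
  then have j: "j < n" and v: "v \<in> words n" by auto
  have "(j # v @ [0..<n], j # [0..<n] @ v) \<in> Sn_cong n"
    using Sn_cong_context[OF Cons.IH[OF v], of "[j]" "[]"] j by simp
  moreover have "(j # [0..<n] @ v, [0..<n] @ j # v) \<in> Sn_cong n"
    using Sn_cong_context[OF Sn_letter_commutes[OF j], of "[]" v] v by simp
  ultimately show ?case by (simp add: Sn_cong_trans)
qed simp

lemma Sn_cong_singleton: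
  assumes no_rel: "\<And>u v k. k < n \<Longrightarrow> u \<in> words n \<Longrightarrow> v \<in> words n \<Longrightarrow>
                     w \<noteq> u @ [0..<n] @ v \<and> w \<noteq> u @ rotate k [0..<n] @ v"
  shows "cls n w = {w}"
proof (rule ccontr)
  assume "cls n w \<noteq> {w}"
  then obtain y where "(w, y) \<in> (Sn_rel0 n \<union> (Sn_rel0 n)\<inverse>)\<^sup>*" "w \<noteq> y"
    by (auto simp: Sn_cong_def)
  then obtain w' where "(w, w') \<in> Sn_rel0 n \<union> (Sn_rel0 n)\<inverse>"
    by (metis converse_rtranclE)
  then show False using no_rel by (auto simp: Sn_rel0_def)
qed

section \<open>Prime ideals of S_n\<close>

text \<open>The words whose class lies in Q; this is the monomial ideal W of the theorem.\<close>
definition ideal_words :: "nat \<Rightarrow> nat list set set \<Rightarrow> nat list set" where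
  "ideal_words n Q = {w \<in> words n. cls n w \<in> Q}"

context
  fixes n :: nat and Q :: "nat list set set"
  assumes prime: "mon_prime (Sn n) Q"
begin

lemma Q_ideal: "mon_ideal (Sn n) Q"
  using prime by (simp add: mon_prime_def)

lemma Q_context:
  assumes w: "cls n w \<in> Q" "w \<in> words n" and u: "u \<in> words n" and v: "v \<in> words n"
  shows "cls n (u @ w @ v) \<in> Q"
proof -
  have "cls n w \<otimes>\<^bsub>Sn n\<^esub> cls n v \<in> Q" using Q_ideal w v by (auto simp: mon_ideal_def carrier_Sn)
  then have "cls n u \<otimes>\<^bsub>Sn n\<^esub> cls n (w @ v) \<in> Q"
    using Q_ideal u w v by (auto simp: mon_ideal_def carrier_Sn mult_Sn)
  then show ?thesis using u w v by (simp add: mult_Sn)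
qed

lemma unit_notin_Q: "cls n [] \<notin> Q"
proof
  assume "cls n [] \<in> Q"
  then have "s \<in> Q" if "s \<in> carrier (Sn n)" for s
    using Q_ideal that monoid.l_one[OF monoid_Sn] unfolding mon_ideal_def one_Sn by metis
  then have "Q = carrier (Sn n)" using Q_ideal unfolding mon_ideal_def by blast
  then show False using prime by (simp add: mon_prime_def)
qed

text \<open>Take a word
  a_(j+1) w in Q.  Since a_1 ... a_n is central and a rotation of it ends with
  a_(j+1), the element a_1 ... a_n s w is a multiple of a_(j+1) w for every s,
  so by primeness a_1 ... a_n or w is in Q; induct on the length of the word.\<close>
lemma top_in_Q: "cls n [0..<n] \<in> Q"
proof -
  have "cls n w \<in> Q \<Longrightarrow> w \<in> words n \<Longrightarrow> cls n [0..<n] \<in> Q" for w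
  proof (induction w)
    case Nil
    then show ?case using unit_notin_Q by simp
  next
    case (Cons j w)
    then have j: "j < n" and w: "w \<in> words n" by auto
    let ?t = "[Suc j..<n] @ [0..<j]"
    have "cls n [0..<n] \<otimes>\<^bsub>Sn n\<^esub> cls n v \<otimes>\<^bsub>Sn n\<^esub> cls n w \<in> Q" if v: "v \<in> words n" for v
    proof -
      have "(([0..<n] @ v) @ w, (v @ [0..<n]) @ w) \<in> Sn_cong n"
        using Sn_cong_context[OF Sn_cong_sym[OF Sn_top_central[OF v]], of "[]" w] w by simp
      moreover have "((v @ [0..<n]) @ w, (v @ ?t) @ (j # w) @ []) \<in> Sn_cong n"
        using Sn_cong_context[OF Sn_rotation_last[OF j], of v w] v w by simp
      ultimately have "cls n (([0..<n] @ v) @ w) = cls n ((v @ ?t) @ (j # w) @ [])"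
        using cls_eq_iff Sn_cong_trans by blast
      moreover have "cls n ((v @ ?t) @ (j # w) @ []) \<in> Q"
        by (rule Q_context[OF Cons.prems(1)]) (use v w j in auto)
      ultimately show ?thesis using v w by (simp add: mult_Sn)
    qed
    then have "cls n [0..<n] \<in> Q \<or> cls n w \<in> Q"
      using prime w unfolding mon_prime_def by (auto simp: carrier_Sn)
    then show ?case using Cons.IH w by blast
  qed
  moreover obtain q where "q \<in> Q" using Q_ideal by (auto simp: mon_ideal_def)
  moreover have "Q \<subseteq> cls n ` words n" using Q_ideal by (simp add: mon_ideal_def carrier_Sn)
  ultimately show ?thesis by blast
qed

text \<open>Consequently the classes outside Q are singletons: any word to which a
  relation applies contains a_1 ... a_n up to congruence, hence lies in Q.\<close>
lemma class_singleton:
  assumes w: "w \<in> words n" and notin: "cls n w \<notin> Q"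
  shows "cls n w = {w}"
proof (rule Sn_cong_singleton)
  fix u v k assume uvk: "k < n" "u \<in> words n" "v \<in> words n"
  have "cls n (u @ [0..<n] @ v) \<in> Q" by (rule Q_context[OF top_in_Q]) (use uvk in auto)
  moreover have "cls n (u @ rotate k [0..<n] @ v) = cls n (u @ [0..<n] @ v)"
    using Sn_rotation[OF uvk] cls_eq_iff Sn_cong_sym by blast
  ultimately show "w \<noteq> u @ [0..<n] @ v \<and> w \<noteq> u @ rotate k [0..<n] @ v"
    using notin by auto
qed

lemma cls_inj_outside_Q: "inj_on (cls n) {w \<in> words n. cls n w \<notin> Q}"
  by (rule inj_onI) (use class_singleton cls_self in blast)

lemma ideal_words_word_ideal: "word_ideal n (ideal_words n Q)"
  unfolding word_ideal_def ideal_words_def using Q_context by auto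

lemma Nil_notin_ideal_words: "[] \<notin> ideal_words n Q"
  using unit_notin_Q by (simp add: ideal_words_def)

lemma ideal_words_join:
  assumes u: "u \<in> words n - ideal_words n Q" and v: "v \<in> words n - ideal_words n Q"
  shows "\<exists>s\<in>words n. u @ s @ v \<notin> ideal_words n Q"
proof -
  have "cls n u \<notin> Q" "cls n v \<notin> Q" using u v by (auto simp: ideal_words_def)
  moreover have "cls n u \<in> carrier (Sn n)" "cls n v \<in> carrier (Sn n)"
    using u v by (auto simp: carrier_Sn)
  ultimately have "\<exists>s\<in>carrier (Sn n). cls n u \<otimes>\<^bsub>Sn n\<^esub> s \<otimes>\<^bsub>Sn n\<^esub> cls n v \<notin> Q"
    using prime unfolding mon_prime_def by blast
  then obtain s where "s \<in> words n" "cls n u \<otimes>\<^bsub>Sn n\<^esub> cls n s \<otimes>\<^bsub>Sn n\<^esub> cls n v \<notin> Q"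
    by (auto simp: carrier_Sn)
  then show ?thesis using u v by (auto simp: ideal_words_def mult_Sn)
qed

lemma ideal_words_nc_prime:
  "nc_prime_ideal (span_in (free_mon n) (ideal_words n Q))
     (mon_alg (free_mon n) :: (nat list \<Rightarrow> 'k::field) ring)"
  by (rule word_ideal_nc_prime[OF ideal_words_word_ideal Nil_notin_ideal_words ideal_words_join])

end

section \<open>The comparison homomorphism K[S_n] -> K<x>/K[W]\<close>

lemma free_mon_mult_at:
  fixes F G :: "nat list \<Rightarrow> 'k::field"
  assumes F: "F \<in> carrier (mon_alg (free_mon m))" and G: "G \<in> carrier (mon_alg (free_mon m))"
    and w: "w \<in> words m"
  shows "(F \<otimes>\<^bsub>mon_alg (free_mon m)\<^esub> G) w = (\<Sum>i\<le>length w. F (take i w) * G (drop i w))"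
proof -
  let ?split = "\<lambda>i. (take i w, drop i w)"
  have "(F \<otimes>\<^bsub>mon_alg (free_mon m)\<^esub> G) w = (\<Sum>(x, y)\<in>?split ` {..length w}. F x * G y)"
  proof (rule mon_alg_mult_factorisations)
    show "?split ` {..length w} \<subseteq> {(x, y). x \<in> carrier (free_mon m) \<and> y \<in> carrier (free_mon m) \<and>
        x \<otimes>\<^bsub>free_mon m\<^esub> y = w}"
      using take_drop_words[OF w] by auto
    show "(x, y) \<in> ?split ` {..length w}" if "x \<otimes>\<^bsub>free_mon m\<^esub> y = w" for x y
      using that by (auto intro!: image_eqI[of _ _ "length x"])
  qed simp
  also have "\<dots> = (\<Sum>i\<le>length w. F (take i w) * G (drop i w))"
    by (subst sum.reindex) (auto intro!: inj_onI simp: min_absorb2 dest: arg_cong[of _ _ length])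
  finally show ?thesis .
qed

lemma Sn_mult_at_singleton:
  fixes f g :: "nat list set \<Rightarrow> 'k::field"
  assumes f: "f \<in> carrier (mon_alg (Sn n))" and g: "g \<in> carrier (mon_alg (Sn n))"
    and w: "w \<in> words n" and single: "cls n w = {w}"
  shows "(f \<otimes>\<^bsub>mon_alg (Sn n)\<^esub> g) (cls n w)
       = (\<Sum>i\<le>length w. f (cls n (take i w)) * g (cls n (drop i w)))"
proof -
  let ?split = "\<lambda>i. (cls n (take i w), cls n (drop i w))"
  have "(f \<otimes>\<^bsub>mon_alg (Sn n)\<^esub> g) (cls n w) = (\<Sum>(x, y)\<in>?split ` {..length w}. f x * g y)"
  proof (rule mon_alg_mult_factorisations)
    show "?split ` {..length w} \<subseteq> {(x, y). x \<in> carrier (Sn n) \<and> y \<in> carrier (Sn n) \<and>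
        x \<otimes>\<^bsub>Sn n\<^esub> y = cls n w}"
      using take_drop_words[OF w] by (auto simp: carrier_Sn mult_Sn)
    show "(x, y) \<in> ?split ` {..length w}"
      if x: "x \<in> carrier (Sn n)" and y: "y \<in> carrier (Sn n)" and prod: "x \<otimes>\<^bsub>Sn n\<^esub> y = cls n w"
      for x y
    proof -
      obtain x0 y0 where xy: "x0 \<in> words n" "y0 \<in> words n" "x = cls n x0" "y = cls n y0"
        using x y by (auto simp: carrier_Sn)
      then have "cls n (x0 @ y0) = {w}" using prod single by (simp add: mult_Sn)
      then have "x0 @ y0 = w" using cls_self[of "x0 @ y0" n] by blast
      then show ?thesis using xy by (auto intro!: image_eqI[of _ _ "length x0"])
    qed
  qed simp
  also have "\<dots> = (\<Sum>i\<le>length w. f (cls n (take i w)) * g (cls n (drop i w)))"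
  proof (rule sum.reindex_cong[OF _ refl])
    show "inj_on ?split {..length w}"
      by (rule inj_onI) (auto simp: cls_eq_iff dest: Sn_cong_length)
  qed simp
  finally show ?thesis .
qed

definition lift_free :: "nat \<Rightarrow> nat list set set \<Rightarrow> (nat list set \<Rightarrow> 'k::field) \<Rightarrow> nat list \<Rightarrow> 'k" where
  "lift_free n Q f = (\<lambda>w. if w \<in> words n \<and> cls n w \<notin> Q then f (cls n w) else 0)"

definition comparison :: "nat \<Rightarrow> nat list set set \<Rightarrow> (nat list set \<Rightarrow> 'k::field) \<Rightarrow> (nat list \<Rightarrow> 'k) set" where
  "comparison n Q f = span_in (free_mon n) (ideal_words n Q) +>\<^bsub>mon_alg (free_mon n)\<^esub> lift_free n Q f"

lemma lift_free_outside: "w \<in> words n \<Longrightarrow> cls n w \<notin> Q \<Longrightarrow> lift_free n Q f w = f (cls n w)"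
  by (simp add: lift_free_def)

lemma lift_free_add:
  "lift_free n Q (f \<oplus>\<^bsub>mon_alg (Sn n)\<^esub> g)
     = lift_free n Q f \<oplus>\<^bsub>mon_alg (free_mon n)\<^esub> (lift_free n Q g :: nat list \<Rightarrow> 'k::field)"
  by (simp add: fun_eq_iff lift_free_def mon_alg_add)

lemma lift_free_smult: "lift_free n Q (smult_fun k f) = smult_fun k (lift_free n Q f)"
  by (simp add: fun_eq_iff lift_free_def smult_fun_def)

context
  fixes n :: nat and Q :: "nat list set set"
  assumes prime: "mon_prime (Sn n) Q"
begin

lemma ideal_words_ideal:
  "ideal (span_in (free_mon n) (ideal_words n Q)) (mon_alg (free_mon n) :: (nat list \<Rightarrow> 'k::field) ring)"
  by (rule word_ideal_span_ideal[OF ideal_words_word_ideal[OF prime]])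

lemma lift_free_closed:
  assumes f: "f \<in> carrier (mon_alg (Sn n) :: (nat list set \<Rightarrow> 'k::field) ring)"
  shows "lift_free n Q f \<in> carrier (mon_alg (free_mon n) :: (nat list \<Rightarrow> 'k) ring)"
proof -
  let ?S = "{w \<in> words n. cls n w \<notin> Q \<and> f (cls n w) \<noteq> 0}"
  have "cls n ` ?S \<subseteq> {x. f x \<noteq> 0}" by auto
  then have "finite (cls n ` ?S)" using mon_alg_finite_supp[OF f] by (rule finite_subset)
  moreover have "inj_on (cls n) ?S" by (rule inj_on_subset[OF cls_inj_outside_Q[OF prime]]) auto
  ultimately have "finite ?S" by (rule finite_imageD)
  moreover have "{w. lift_free n Q f w \<noteq> 0} \<subseteq> ?S" by (auto simp: lift_free_def split: if_splits)
  ultimately have "finite {w. lift_free n Q f w \<noteq> 0}" by (rule rev_finite_subset)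
  then show ?thesis by (auto simp: mon_alg_carrier_iff lift_free_def)
qed

text \<open>Lifting is multiplicative at every word outside W: both sides sum over
  the splittings of the word, whose factors stay outside Q.\<close>
lemma lift_free_mult_at:
  fixes f g :: "nat list set \<Rightarrow> 'k::field"
  assumes f: "f \<in> carrier (mon_alg (Sn n))" and g: "g \<in> carrier (mon_alg (Sn n))"
    and w: "w \<in> words n" and notin: "cls n w \<notin> Q"
  shows "(f \<otimes>\<^bsub>mon_alg (Sn n)\<^esub> g) (cls n w)
       = (lift_free n Q f \<otimes>\<^bsub>mon_alg (free_mon n)\<^esub> lift_free n Q g) w"
proof -
  have factors: "cls n (take i w) \<notin> Q \<and> cls n (drop i w) \<notin> Q" for i
    using Q_context[OF prime, of "take i w" "[]" "drop i w"]
          Q_context[OF prime, of "drop i w" "take i w" "[]"] take_drop_words[OF w, of i] notin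
    by auto
  have "(f \<otimes>\<^bsub>mon_alg (Sn n)\<^esub> g) (cls n w)
      = (\<Sum>i\<le>length w. f (cls n (take i w)) * g (cls n (drop i w)))"
    by (rule Sn_mult_at_singleton[OF f g w class_singleton[OF prime w notin]])
  also have "\<dots> = (\<Sum>i\<le>length w. lift_free n Q f (take i w) * lift_free n Q g (drop i w))"
    using factors take_drop_words[OF w] by (simp add: lift_free_def)
  also have "\<dots> = (lift_free n Q f \<otimes>\<^bsub>mon_alg (free_mon n)\<^esub> lift_free n Q g) w"
    by (rule free_mon_mult_at[symmetric, OF lift_free_closed[OF f] lift_free_closed[OF g] w])
  finally show ?thesis .
qed

lemma lift_free_one:
  "lift_free n Q \<one>\<^bsub>mon_alg (Sn n)\<^esub> = (\<one>\<^bsub>mon_alg (free_mon n)\<^esub> :: nat list \<Rightarrow> 'k::field)"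
  using unit_notin_Q[OF prime] cls_Nil_iff[of n]
  by (auto simp: fun_eq_iff lift_free_def mon_alg_one one_Sn)

lemma comparison_eq_iff:
  fixes F G :: "nat list \<Rightarrow> 'k::field"
  assumes F: "F \<in> carrier (mon_alg (free_mon n))" and G: "G \<in> carrier (mon_alg (free_mon n))"
  shows "span_in (free_mon n) (ideal_words n Q) +>\<^bsub>mon_alg (free_mon n)\<^esub> F
       = span_in (free_mon n) (ideal_words n Q) +>\<^bsub>mon_alg (free_mon n)\<^esub> G
     \<longleftrightarrow> (\<forall>w \<in> words n. cls n w \<notin> Q \<longrightarrow> F w = G w)"
proof -
  have words: "x \<in> words n" if "F x \<noteq> G x" for x
    using that mon_alg_supp[OF F] mon_alg_supp[OF G] by (cases "F x = 0") auto
  show ?thesis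
    unfolding span_in_coset_eq_iff[OF monoid_free_mon ideal_words_ideal F G]
    using words by (auto simp: ideal_words_def)
qed

text \<open>The comparison map is a ring homomorphism; additivity and the unit are
  immediate, multiplicativity is lift_free_mult_at read modulo K[W].\<close>
lemma comparison_hom:
  "ring_hom_ring (mon_alg (Sn n) :: (nat list set \<Rightarrow> 'k::field) ring)
     (mon_alg (free_mon n) Quot span_in (free_mon n) (ideal_words n Q)) (comparison n Q)"
proof -
  let ?A = "mon_alg (Sn n) :: (nat list set \<Rightarrow> 'k) ring"
  let ?F = "mon_alg (free_mon n) :: (nat list \<Rightarrow> 'k) ring"
  let ?J = "span_in (free_mon n) (ideal_words n Q) :: (nat list \<Rightarrow> 'k) set"
  have J: "ideal ?J ?F" by (rule ideal_words_ideal)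
  have h: "(+>\<^bsub>?F\<^esub>) ?J \<in> ring_hom ?F (?F Quot ?J)" by (rule ideal.rcos_ring_hom[OF J])
  interpret F: ring ?F by (rule mon_alg_ring[OF monoid_free_mon])
  note lift = lift_free_closed
  have lift_mult: "comparison n Q (x \<otimes>\<^bsub>?A\<^esub> y) = ?J +>\<^bsub>?F\<^esub> (lift_free n Q x \<otimes>\<^bsub>?F\<^esub> lift_free n Q y)"
    if x: "x \<in> carrier ?A" and y: "y \<in> carrier ?A" for x y
    unfolding comparison_def
    by (subst comparison_eq_iff[OF lift[OF mon_alg_mult_closed[OF monoid_Sn x y]]
                                   F.m_closed[OF lift[OF x] lift[OF y]]])
      (simp add: lift_free_outside lift_free_mult_at[OF x y])
  show ?thesis
  proof (rule ring_hom_ringI)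
    show "ring ?A" by (rule mon_alg_ring[OF monoid_Sn])
    show "ring (?F Quot ?J)" by (rule ideal.quotient_is_ring[OF J])
    show "comparison n Q x \<in> carrier (?F Quot ?J)" if "x \<in> carrier ?A" for x
      unfolding comparison_def using ring_hom_closed[OF h lift[OF that]] .
    show "comparison n Q (x \<oplus>\<^bsub>?A\<^esub> y) = comparison n Q x \<oplus>\<^bsub>?F Quot ?J\<^esub> comparison n Q y"
      if "x \<in> carrier ?A" "y \<in> carrier ?A" for x y
      unfolding comparison_def lift_free_add using ring_hom_add[OF h lift[OF that(1)] lift[OF that(2)]] .
    show "comparison n Q \<one>\<^bsub>?A\<^esub> = \<one>\<^bsub>?F Quot ?J\<^esub>"
      unfolding comparison_def lift_free_one using ring_hom_one[OF h] .
    show "comparison n Q (x \<otimes>\<^bsub>?A\<^esub> y) = comparison n Q x \<otimes>\<^bsub>?F Quot ?J\<^esub> comparison n Q y"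
      if "x \<in> carrier ?A" "y \<in> carrier ?A" for x y
      using lift_mult[OF that] ring_hom_mult[OF h lift[OF that(1)] lift[OF that(2)]]
      by (simp add: comparison_def)
  qed
qed

lemma comparison_kernel:
  "a_kernel (mon_alg (Sn n) :: (nat list set \<Rightarrow> 'k::field) ring)
     (mon_alg (free_mon n) Quot span_in (free_mon n) (ideal_words n Q)) (comparison n Q)
   = span_in (Sn n) Q"
proof -
  let ?A = "mon_alg (Sn n) :: (nat list set \<Rightarrow> 'k) ring"
  let ?F = "mon_alg (free_mon n) :: (nat list \<Rightarrow> 'k) ring"
  let ?J = "span_in (free_mon n) (ideal_words n Q) :: (nat list \<Rightarrow> 'k) set"
  have J: "ideal ?J ?F" by (rule ideal_words_ideal)
  interpret F: ring ?F by (rule mon_alg_ring[OF monoid_free_mon])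
  have zero: "?J +>\<^bsub>?F\<^esub> \<zero>\<^bsub>?F\<^esub> = ?J"
    by (rule F.a_rcos_zero[OF J]) (simp add: ideal.axioms(1)[OF J] additive_subgroup.zero_closed)
  have "comparison n Q f = ?J \<longleftrightarrow> f \<in> span_in (Sn n) Q" if f: "f \<in> carrier ?A" for f
  proof -
    have "comparison n Q f = ?J \<longleftrightarrow> (\<forall>w \<in> words n. cls n w \<notin> Q \<longrightarrow> lift_free n Q f w = 0)"
      using comparison_eq_iff[OF lift_free_closed[OF f] F.zero_closed] zero
      by (simp add: comparison_def mon_alg_zero)
    also have "\<dots> \<longleftrightarrow> (\<forall>Y. f Y \<noteq> 0 \<longrightarrow> Y \<in> Q)"
      using mon_alg_supp[OF f] by (auto simp: lift_free_def carrier_Sn)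
    also have "\<dots> \<longleftrightarrow> f \<in> span_in (Sn n) Q" using f by (simp add: span_in_def)
    finally show ?thesis .
  qed
  moreover have "span_in (Sn n) Q \<subseteq> carrier ?A" by (auto simp: span_in_def)
  ultimately show ?thesis unfolding a_kernel_def' by (auto simp: FactRing_def)
qed

text \<open>The comparison map is onto: every word outside W is the unique
  representative of its class.\<close>
lemma comparison_surj:
  "comparison n Q ` carrier (mon_alg (Sn n) :: (nat list set \<Rightarrow> 'k::field) ring)
   = carrier (mon_alg (free_mon n) Quot span_in (free_mon n) (ideal_words n Q))"
proof
  let ?A = "mon_alg (Sn n) :: (nat list set \<Rightarrow> 'k) ring"
  let ?F = "mon_alg (free_mon n) :: (nat list \<Rightarrow> 'k) ring"
  let ?J = "span_in (free_mon n) (ideal_words n Q) :: (nat list \<Rightarrow> 'k) set"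
  interpret hom: ring_hom_ring ?A "?F Quot ?J" "comparison n Q" by (rule comparison_hom)
  show "comparison n Q ` carrier ?A \<subseteq> carrier (?F Quot ?J)"
    using hom.hom_closed by blast
  show "carrier (?F Quot ?J) \<subseteq> comparison n Q ` carrier ?A"
  proof
    fix C assume "C \<in> carrier (?F Quot ?J)"
    then obtain g where g: "g \<in> carrier ?F" "C = ?J +>\<^bsub>?F\<^esub> g"
      unfolding FactRing_def A_RCOSETS_def' by auto
    define f where "f = (\<lambda>Y. if Y \<in> carrier (Sn n) \<and> Y \<notin> Q then g (the_elem Y) else (0::'k))"
    have the_elem_cls: "the_elem (cls n w) = w" if "w \<in> words n" "cls n w \<notin> Q" for w
      using class_singleton[OF prime that] by simp
    have "{Y. f Y \<noteq> 0} \<subseteq> cls n ` {w. g w \<noteq> 0}"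
      using the_elem_cls by (auto simp: f_def carrier_Sn split: if_splits)
    then have "finite {Y. f Y \<noteq> 0}"
      by (rule finite_subset) (simp add: mon_alg_finite_supp[OF g(1)])
    moreover have "\<forall>Y. Y \<notin> carrier (Sn n) \<longrightarrow> f Y = 0" by (simp add: f_def)
    ultimately have f_closed: "f \<in> carrier ?A" by (simp add: mon_alg_carrier_iff)
    have "comparison n Q f = C"
      unfolding comparison_def g(2)
      by (subst comparison_eq_iff[OF lift_free_closed[OF f_closed] g(1)])
        (simp add: lift_free_def f_def carrier_Sn the_elem_cls)
    then show "C \<in> comparison n Q ` carrier ?A" using f_closed by blast
  qed
qed

text \<open>The induced isomorphism K[S_n]/K[Q] -> K<x>/K[W] is K-linear, since
  lifting commutes with scalar multiplication.\<close>
lemma comparison_quot_alg_iso: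
  "quot_alg_iso (mon_alg (Sn n)) (span_in (Sn n) Q)
     (mon_alg (free_mon n)) (span_in (free_mon n) (ideal_words n Q))
     (\<lambda>Z. the_elem (comparison n Q ` Z) :: (nat list \<Rightarrow> 'k::field) set)"
  unfolding quot_alg_iso_def
proof (intro conjI allI impI)
  let ?A = "mon_alg (Sn n) :: (nat list set \<Rightarrow> 'k) ring"
  let ?F = "mon_alg (free_mon n) :: (nat list \<Rightarrow> 'k) ring"
  let ?J = "span_in (free_mon n) (ideal_words n Q) :: (nat list \<Rightarrow> 'k) set"
  let ?I = "span_in (Sn n) Q :: (nat list set \<Rightarrow> 'k) set"
  interpret hom: ring_hom_ring ?A "?F Quot ?J" "comparison n Q" by (rule comparison_hom)
  show "(\<lambda>Z. the_elem (comparison n Q ` Z)) \<in> ring_iso (?A Quot ?I) (?F Quot ?J)"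
    using hom.FactRing_iso_set[OF comparison_surj] unfolding comparison_kernel .
  fix k x y assume x: "x \<in> carrier ?A" and y: "y \<in> carrier ?F"
    and e: "the_elem (comparison n Q ` (?I +>\<^bsub>?A\<^esub> x)) = ?J +>\<^bsub>?F\<^esub> y"
  have induced: "the_elem (comparison n Q ` (?I +>\<^bsub>?A\<^esub> z)) = comparison n Q z"
    if "z \<in> carrier ?A" for z
    using hom.the_elem_simp[OF that] unfolding comparison_kernel .
  have "\<forall>w\<in>words n. cls n w \<notin> Q \<longrightarrow> lift_free n Q x w = y w"
    using e induced[OF x] comparison_eq_iff[OF lift_free_closed[OF x] y]
    by (simp add: comparison_def)
  then have "comparison n Q (smult_fun k x) = ?J +>\<^bsub>?F\<^esub> smult_fun k y"
    unfolding comparison_def lift_free_smult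
    by (subst comparison_eq_iff[OF smult_fun_closed[OF lift_free_closed[OF x]] smult_fun_closed[OF y]])
      (simp add: smult_fun_def)
  then show "the_elem (comparison n Q ` (?I +>\<^bsub>?A\<^esub> smult_fun k x)) = ?J +>\<^bsub>?F\<^esub> smult_fun k y"
    using induced[OF smult_fun_closed[OF x]] by simp
qed

end

theorem mainTheorem7:
  fixes n :: nat and Q :: "nat list set set"
  assumes "n \<ge> 3"
    and "mon_prime (Sn n) Q"
  shows "(\<forall>s\<in>carrier (Sn n). Sn_top n \<otimes>\<^bsub>Sn n\<^esub> s \<in> Q)
    \<and> nc_prime_ideal (span_in (Sn n) Q :: (nat list set \<Rightarrow> 'k::field) set) (mon_alg (Sn n))
    \<and> (\<exists>m W (\<phi> :: (nat list set \<Rightarrow> 'k) set \<Rightarrow> (nat list \<Rightarrow> 'k) set).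
          word_ideal m W
        \<and> prime_ring (mon_alg (free_mon m) Quot span_in (free_mon m) W)
        \<and> quot_alg_iso (mon_alg (Sn n)) (span_in (Sn n) Q)
                       (mon_alg (free_mon m)) (span_in (free_mon m) W) \<phi>)"
proof -
  note prime = assms(2)
  let ?A = "mon_alg (Sn n) :: (nat list set \<Rightarrow> 'k) ring"
  let ?B = "(mon_alg (free_mon n) :: (nat list \<Rightarrow> 'k) ring) Quot span_in (free_mon n) (ideal_words n Q)"
  interpret hom: ring_hom_ring ?A ?B "comparison n Q" by (rule comparison_hom[OF prime])
  note quotient_prime = prime_ring_quotient[OF ideal_words_nc_prime[OF prime]]
  have "\<forall>s\<in>carrier (Sn n). Sn_top n \<otimes>\<^bsub>Sn n\<^esub> s \<in> Q"
    using top_in_Q[OF prime] Q_ideal[OF prime] by (simp add: Sn_top_def mon_ideal_def)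
  moreover have "nc_prime_ideal (span_in (Sn n) Q) ?A"
    using hom.kernel_nc_prime[OF comparison_surj[OF prime] quotient_prime]
    unfolding comparison_kernel[OF prime] .
  moreover have "\<exists>m W (\<phi> :: (nat list set \<Rightarrow> 'k) set \<Rightarrow> (nat list \<Rightarrow> 'k) set).
          word_ideal m W
        \<and> prime_ring (mon_alg (free_mon m) Quot span_in (free_mon m) W)
        \<and> quot_alg_iso (mon_alg (Sn n)) (span_in (Sn n) Q)
                       (mon_alg (free_mon m)) (span_in (free_mon m) W) \<phi>"
    by (intro exI[of _ n] exI[of _ "ideal_words n Q"] exI[of _ "\<lambda>Z. the_elem (comparison n Q ` Z)"]
        conjI ideal_words_word_ideal[OF prime] quotient_prime comparison_quot_alg_iso[OF prime])
  ultimately show ?thesis by (intro conjI)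
qed

end
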